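(* Fix $p\in(0,1]$. Let $G=(G_i)_{i\in\mathbb{Z}}$ be a sequence of random variables taking values in $\mathbb{Z}$. The following are equivalent: (P1) $(G_i)_{i\in\mathbb{Z}}$ is a family of independent $\mathrm{Geom}_+(p)$ random variables; (P2) $(G_i)_{i\ge0}$ is a family of independent $\mathrm{Geom}_+(p)$ random variables, and $\Phi_n(G)\overset{d}{=}G$ for every integer $n\ge0$.
   Context: $\mathrm{Geom}_+(p)$: $\mathbb{P}(G=k)=(1-p)^{k-1}p$ for $k\ge1$. For an integer sequence $g=(g_i)_{i\in\mathbb{Z}}$ and $n\ge0$, let $s_n=\min\{i\ge0:g_0+\dots+g_i>n\}$ (assumed finite, which holds when $g_i\ge1$ for $i\ge0$). Define $\Phi_n(g)=(\phi_i)_{i\in\mathbb{Z}}$ by: $\phi_i=g_{s_n+i}$ for $i\ge1$; $\phi_0=\sum_{j=0}^{s_n}g_j-n$; and, if $s_n\ge1$: $\phi_{-1}=n+1-\sum_{j=0}^{s_n-1}g_j$, $\phi_i=g_{s_n+i+1}$ for $-s_n\le i\le-2$, $\phi_{-s_n-1}=g_0+g_{-1}-1$, $\phi_i=g_{s_n+i}$ for $i\le-s_n-2$; if $s_n=0$: $\phi_{-1}=n+g_{-1}$ and $\phi_i=g_i$ for $i\le-2$. *)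

theory Defs
  imports "HOL-Probability.Probability"
begin

definition s_idx :: "nat \<Rightarrow> (int \<Rightarrow> int) \<Rightarrow> int" where
  "s_idx n g = int (LEAST s::nat. (\<Sum>j\<in>{0..int s}. g j) > int n)"

definition Phi :: "nat \<Rightarrow> (int \<Rightarrow> int) \<Rightarrow> (int \<Rightarrow> int)" where
  "Phi n g = (\<lambda>i. let s = s_idx n g in
     if i \<ge> 1 then g (s + i)
     else if i = 0 then (\<Sum>j\<in>{0..s}. g j) - int n
     else if s \<ge> 1 then
       (if i = -1 then int n + 1 - (\<Sum>j\<in>{0..s-1}. g j)
        else if -s \<le> i \<and> i \<le> -2 then g (s + i + 1)
        else if i = -s - 1 then g 0 + g (-1) - 1
        else g (s + i))
     else (if i = -1 then int n + g (-1) else g i))"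

definition geom_pos_rv :: "'a measure \<Rightarrow> real \<Rightarrow> ('a \<Rightarrow> int) \<Rightarrow> bool" where
  "geom_pos_rv M p X \<longleftrightarrow>
     (\<forall>k::int. measure M {\<omega> \<in> space M. X \<omega> = k} =
        (if k \<ge> 1 then (1 - p) ^ nat (k - 1) * p else 0))"

definition seq_law :: "'a measure \<Rightarrow> ('a \<Rightarrow> (int \<Rightarrow> int)) \<Rightarrow> (int \<Rightarrow> int) measure" where
  "seq_law M X = distr M (Pi\<^sub>M UNIV (\<lambda>_. count_space UNIV)) X"

end

theory Submission
  imports Defs
begin

(*
  Fix the crossing index s = s_n(g). For this s, Phi_n permutes all coordinates but three, on
  which it preserves the sum, and it has an explicit inverse: s is read back off Phi_n(g) as the
  step at which the backward partial sums starting from index -1 first exceed n. Restricted to a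
  finite window around a cylinder, this is a bijection between the configurations with crossing
  index s that Phi_n maps into the cylinder and those in the cylinder with backward crossing
  index s. The i.i.d. Geom_+(p) weight of a positive configuration depends only on its length
  and its sum, so the bijection preserves weights and Phi_n preserves all cylinder probabilities.

  Conversely, if s_n > K then Phi_n(G) on [-K, K] is a function of G_0, ..., G_(n+K) alone, whose
  law is prescribed, while P(s_n <= K) <= P(G_0 + ... + G_K > n) tends to 0. Comparing with an
  i.i.d. sequence, whose law Phi_n preserves by the first part, identifies every cylinder
  probability of G.
*)

lemma sum_int_ivl_last: "(a::int) \<le> b \<Longrightarrow> (\<Sum>i\<in>{a..b}. f i) = (\<Sum>i\<in>{a..b-1}. f i) + f b"
proof -
  assume "a \<le> b"
  then have "{a..b} = insert b {a..b-1}" by auto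
  then show ?thesis by (simp add: add.commute)
qed

lemma sum_int_ivl_first: "(a::int) \<le> b \<Longrightarrow> (\<Sum>i\<in>{a..b}. f i) = f a + (\<Sum>i\<in>{a+1..b}. f i)"
proof -
  assume "a \<le> b"
  then have "{a..b} = insert a {a+1..b}" by auto
  then show ?thesis by simp
qed

lemma sum_int_ivl_shift: "(\<Sum>i\<in>{a..b}. f (i + c)) = (\<Sum>i\<in>{a+c..b+c}. (f i :: 'b::comm_monoid_add))"
  for a b c :: int
  by (rule sum.reindex_bij_witness[where i="\<lambda>i. i - c" and j="\<lambda>i. i + c"]) auto

lemma finite_subset_symmetric_ivl:
  fixes J :: "int set"
  assumes "finite J"
  obtains K where "K \<ge> 0" and "J \<subseteq> {-K..K}"
proof
  have "\<bar>j\<bar> \<le> (\<Sum>j\<in>J. \<bar>j\<bar>)" if "j \<in> J" for j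
    using that assms by (intro member_le_sum) auto
  then show "J \<subseteq> {-(\<Sum>j\<in>J. \<bar>j\<bar>)..(\<Sum>j\<in>J. \<bar>j\<bar>)}" by (force simp: abs_le_iff)
qed (simp add: sum_nonneg)

subsection \<open>Crossing index\<close>

definition crosses :: "nat \<Rightarrow> nat \<Rightarrow> (int \<Rightarrow> int) \<Rightarrow> bool" where
  "crosses n s g \<longleftrightarrow> (\<Sum>j\<in>{0..int s - 1}. g j) \<le> int n \<and> int n < (\<Sum>j\<in>{0..int s}. g j)"

lemma partial_sum_mono:
  fixes g :: "int \<Rightarrow> int"
  assumes "\<forall>j\<in>{0..int m}. g j \<ge> 0" and "s \<le> s'" and "s' \<le> m"
  shows "(\<Sum>j\<in>{0..int s}. g j) \<le> (\<Sum>j\<in>{0..int s'}. g j)"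
  by (rule sum_mono2) (use assms in auto)

lemma crosses_local:
  assumes "\<forall>j\<in>{0..int s}. x j = x' j"
  shows "crosses n s x = crosses n s x'"
proof -
  have "(\<Sum>j\<in>{0..int s}. x j) = (\<Sum>j\<in>{0..int s}. x' j)"
    "(\<Sum>j\<in>{0..int s - 1}. x j) = (\<Sum>j\<in>{0..int s - 1}. x' j)"
    using assms by (auto intro: sum.cong)
  then show ?thesis by (simp add: crosses_def)
qed

text \<open>Positivity of \<open>g\<^sub>0, \<dots>, g\<^sub>n\<close> makes the predicate under the \<open>LEAST\<close> in
  \<^const>\<open>s_idx\<close> hold at \<open>n\<close>; without it \<^const>\<open>s_idx\<close> may be a junk value.\<close>

lemma crosses_s_idx:
  fixes g :: "int \<Rightarrow> int"
  assumes pos: "\<forall>j\<in>{0..int n}. g j \<ge> 1"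
  shows "nat (s_idx n g) \<le> n" and "crosses n (nat (s_idx n g)) g"
proof -
  let ?P = "\<lambda>s::nat. int n < (\<Sum>j\<in>{0..int s}. g j)"
  have "(\<Sum>j\<in>{0..int n}. 1) \<le> (\<Sum>j\<in>{0..int n}. g j)"
    using pos by (intro sum_mono) auto
  then have Pn: "?P n" by simp
  have s: "nat (s_idx n g) = (LEAST s. ?P s)" by (simp add: s_idx_def)
  show "nat (s_idx n g) \<le> n" unfolding s by (rule Least_le[of ?P, OF Pn])
  have "?P (LEAST s. ?P s)" by (rule LeastI[of ?P, OF Pn])
  moreover have "\<not> ?P ((LEAST s. ?P s) - 1)" if "(LEAST s. ?P s) \<noteq> 0"
    using not_less_Least[of "(LEAST s. ?P s) - 1" ?P] that by linarith
  ultimately show "crosses n (nat (s_idx n g)) g"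
    unfolding s crosses_def by (cases "(LEAST s. ?P s) = 0") auto
qed

lemma crosses_iff_s_idx:
  fixes g :: "int \<Rightarrow> int"
  assumes pos: "\<forall>j\<in>{0..int n}. g j \<ge> 1" and "s \<le> n"
  shows "crosses n s g \<longleftrightarrow> nat (s_idx n g) = s"
proof
  assume cr: "crosses n s g"
  define s0 where "s0 = nat (s_idx n g)"
  have s0: "s0 \<le> n" "crosses n s0 g" using crosses_s_idx[OF pos] by (simp_all add: s0_def)
  have "\<not> s0 < s" "\<not> s < s0"
  proof -
    have "(\<Sum>j\<in>{0..int t}. g j) \<le> (\<Sum>j\<in>{0..int t' - 1}. g j)" if "t < t'" "t' \<le> n" for t t'
    proof -
      have "(\<Sum>j\<in>{0..int t}. g j) \<le> (\<Sum>j\<in>{0..int (t' - 1)}. g j)"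
        by (rule partial_sum_mono[of n]) (use pos that in auto)
      then show ?thesis using that by simp
    qed
    then show "\<not> s0 < s" "\<not> s < s0" using cr s0 \<open>s \<le> n\<close> unfolding crosses_def by force+
  qed
  then show "s0 = s" by simp
qed (use crosses_s_idx[OF pos] in auto)

definition crosses_back :: "nat \<Rightarrow> nat \<Rightarrow> (int \<Rightarrow> int) \<Rightarrow> bool" where
  "crosses_back n s y \<longleftrightarrow> crosses n s (\<lambda>j. y (-1 - j))"

lemma crosses_back_iff:
  "crosses_back n s y \<longleftrightarrow>
     (\<Sum>i\<in>{-int s..-1}. y i) \<le> int n \<and> int n < (\<Sum>i\<in>{-int s - 1..-1}. y i)"
proof -
  have rev: "(\<Sum>i\<in>{-b..-1}. y i) = (\<Sum>j\<in>{0..b-1}. y (-1-j))" for b :: int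
    by (rule sum.reindex_bij_witness[where i="\<lambda>i. -1-i" and j="\<lambda>j. -1-j"]) auto
  show ?thesis using rev[of "int s"] rev[of "int s + 1"] by (simp add: crosses_back_def crosses_def)
qed

lemma crosses_back_local:
  assumes "\<forall>i\<in>{-int s - 1..-1}. y i = y' i"
  shows "crosses_back n s y = crosses_back n s y'"
  unfolding crosses_back_def by (rule crosses_local) (use assms in auto)

definition Phi_at :: "nat \<Rightarrow> nat \<Rightarrow> (int \<Rightarrow> int) \<Rightarrow> int \<Rightarrow> int" where
  "Phi_at n s0 g i = (let s = int s0 in
     if i \<ge> 1 then g (s + i)
     else if i = 0 then (\<Sum>j\<in>{0..s}. g j) - int n
     else if s \<ge> 1 then
       (if i = -1 then int n + 1 - (\<Sum>j\<in>{0..s-1}. g j)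
        else if -s \<le> i \<and> i \<le> -2 then g (s + i + 1)
        else if i = -s - 1 then g 0 + g (-1) - 1
        else g (s + i))
     else (if i = -1 then int n + g (-1) else g i))"

lemma Phi_eq_Phi_at: "Phi n g = Phi_at n (nat (s_idx n g)) g"
proof -
  have "int (nat (s_idx n g)) = s_idx n g" by (simp add: s_idx_def)
  then show ?thesis unfolding Phi_def Phi_at_def Let_def by presburger
qed

definition Phi_at_inv :: "nat \<Rightarrow> nat \<Rightarrow> (int \<Rightarrow> int) \<Rightarrow> int \<Rightarrow> int" where
  "Phi_at_inv n s0 y j = (let s = int s0 in
     if s = 0 then (if j = 0 then y 0 + int n else if j = -1 then y (-1) - int n else y j)
     else if j \<ge> s + 1 then y (j - s)
     else if j = s then y 0 + y (-1) - 1
     else if 1 \<le> j \<and> j \<le> s - 1 then y (j - s - 1)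
     else if j = 0 then int n + 1 - (\<Sum>i\<in>{-s..-1}. y i)
     else if j = -1 then y (-s - 1) + (\<Sum>i\<in>{-s..-1}. y i) - int n
     else y (j - s))"

lemma sum_shift_to_negative:
  "s \<ge> 1 \<Longrightarrow> (\<Sum>j\<in>{0..s - 1}. x j) = x 0 + (\<Sum>i\<in>{-s..-2}. x (i + s + 1))" for s :: int
proof -
  assume s: "s \<ge> 1"
  have "(\<Sum>i\<in>{-s..-2}. x (i + s + 1)) = (\<Sum>i\<in>{-s..-2}. x (i + (s + 1)))" by (simp add: add.assoc)
  also have "\<dots> = (\<Sum>i\<in>{1..s-1}. x i)" by (subst sum_int_ivl_shift) simp
  finally show ?thesis using s by (simp add: sum_int_ivl_first)
qed

lemma sum_Phi_at_negative:
  assumes "s > 0"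
  shows "(\<Sum>i\<in>{-int s..-1}. Phi_at n s x i) = int n + 1 - x 0"
proof -
  let ?s = "int s"
  have s1: "?s \<ge> 1" using assms by simp
  have "(\<Sum>i\<in>{-?s..-1}. Phi_at n s x i) = (\<Sum>i\<in>{-?s..-2}. Phi_at n s x i) + Phi_at n s x (-1)"
    using s1 by (subst sum_int_ivl_last) auto
  also have "(\<Sum>i\<in>{-?s..-2}. Phi_at n s x i) = (\<Sum>i\<in>{-?s..-2}. x (i + ?s + 1))"
    by (rule sum.cong) (auto simp: Phi_at_def Let_def add_ac)
  also have "\<dots> = (\<Sum>j\<in>{0..?s - 1}. x j) - x 0" using sum_shift_to_negative[OF s1, of x] by simp
  also have "Phi_at n s x (-1) = int n + 1 - (\<Sum>j\<in>{0..?s - 1}. x j)" using s1 by (simp add: Phi_at_def)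
  finally show ?thesis by simp
qed

lemma Phi_at_inv_Phi_at: "Phi_at_inv n s (Phi_at n s x) = x"
proof (cases "s = 0")
  case True
  then show ?thesis by (auto simp: Phi_at_def Phi_at_inv_def)
next
  case False
  have s1: "int s \<ge> 1" using False by simp
  have "(\<Sum>j\<in>{0..int s}. x j) = (\<Sum>j\<in>{0..int s - 1}. x j) + x (int s)"
    using s1 by (subst sum_int_ivl_last) auto
  with s1 sum_Phi_at_negative[of s n x] False show ?thesis
    by (auto simp: Phi_at_def Phi_at_inv_def Let_def)
qed

lemma Phi_at_Phi_at_inv: "Phi_at n s (Phi_at_inv n s y) = y"
proof (cases "s = 0")
  case True
  then show ?thesis by (auto simp: Phi_at_def Phi_at_inv_def)
next
  case False
  let ?s = "int s" and ?x = "Phi_at_inv n s y"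
  have s1: "?s \<ge> 1" using False by simp
  have "(\<Sum>j\<in>{0..?s-1}. ?x j) = ?x 0 + (\<Sum>i\<in>{-?s..-2}. ?x (i + ?s + 1))"
    by (rule sum_shift_to_negative[OF s1])
  also have "(\<Sum>i\<in>{-?s..-2}. ?x (i + ?s + 1)) = (\<Sum>i\<in>{-?s..-2}. y i)"
    by (rule sum.cong) (auto simp: Phi_at_inv_def)
  also have "?x 0 = int n + 1 - (\<Sum>i\<in>{-?s..-1}. y i)" using s1 by (simp add: Phi_at_inv_def)
  also have "(\<Sum>i\<in>{-?s..-1}. y i) = (\<Sum>i\<in>{-?s..-2}. y i) + y (-1)"
    using s1 by (subst sum_int_ivl_last) auto
  finally have S0: "(\<Sum>j\<in>{0..?s-1}. ?x j) = int n + 1 - y (-1)" by simp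
  have "(\<Sum>j\<in>{0..?s}. ?x j) = int n + y 0"
    using S0 s1 by (subst sum_int_ivl_last) (auto simp: Phi_at_inv_def)
  with s1 S0 show ?thesis by (auto simp: Phi_at_def Phi_at_inv_def Let_def)
qed

lemma crosses_back_Phi_at:
  assumes "crosses n s x" and "x 0 \<ge> 1" and "x (-1) \<ge> 1"
  shows "crosses_back n s (Phi_at n s x)"
proof (cases "s = 0")
  case True
  then show ?thesis using assms by (simp add: crosses_back_iff crosses_def Phi_at_def)
next
  case False
  have "(\<Sum>i\<in>{-int s-1..-1}. Phi_at n s x i) = Phi_at n s x (-int s - 1) + (\<Sum>i\<in>{-int s..-1}. Phi_at n s x i)"
    using False by (subst sum_int_ivl_first) auto
  then show ?thesis
    using assms False sum_Phi_at_negative[of s n x] by (simp add: crosses_back_iff crosses_def Phi_at_def)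
qed

lemma crosses_Phi_at_inv:
  assumes "crosses_back n s y" and "y 0 \<ge> 1" and "y (-1) \<ge> 1"
  shows "crosses n s (Phi_at_inv n s y)"
proof (cases "s = 0")
  case True
  then show ?thesis using assms by (simp add: crosses_back_iff crosses_def Phi_at_inv_def)
next
  case False
  let ?x = "Phi_at_inv n s y"
  have "Phi_at n s ?x (-1) = y (-1)" by (simp add: Phi_at_Phi_at_inv)
  then have "(\<Sum>j\<in>{0..int s-1}. ?x j) = int n + 1 - y (-1)"
    using False by (simp add: Phi_at_def)
  moreover have "(\<Sum>j\<in>{0..int s}. ?x j) = (\<Sum>j\<in>{0..int s-1}. ?x j) + ?x (int s)"
    using False by (subst sum_int_ivl_last) auto
  ultimately show ?thesis using assms False by (simp add: crosses_def Phi_at_inv_def)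
qed

definition src_win :: "int \<Rightarrow> nat \<Rightarrow> int set" where
  "src_win K s = {-1-K..int s+K}"

definition tgt_win :: "int \<Rightarrow> nat \<Rightarrow> int set" where
  "tgt_win K s = {-int s-1-K..K}"

lemma Phi_at_local:
  assumes "K \<ge> 0" and "i \<in> tgt_win K s" and "\<forall>j\<in>src_win K s. x j = x' j"
  shows "Phi_at n s x i = Phi_at n s x' i"
proof -
  have eq: "x j = x' j" if "-1-K \<le> j" "j \<le> int s + K" for j
    using assms(3) that by (auto simp: src_win_def)
  have "(\<Sum>j\<in>{0..int s}. x j) = (\<Sum>j\<in>{0..int s}. x' j)"
    "(\<Sum>j\<in>{0..int s - 1}. x j) = (\<Sum>j\<in>{0..int s - 1}. x' j)"
    "x 0 = x' 0" "x (-1) = x' (-1)"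
    using assms(1) by (auto intro!: sum.cong eq)
  with assms(1,2) show ?thesis by (auto simp: tgt_win_def Phi_at_def Let_def intro!: eq)
qed

lemma Phi_at_inv_local:
  assumes "K \<ge> 0" and "j \<in> src_win K s" and "\<forall>i\<in>tgt_win K s. y i = y' i"
  shows "Phi_at_inv n s y j = Phi_at_inv n s y' j"
proof -
  have eq: "y i = y' i" if "-int s-1-K \<le> i" "i \<le> K" for i
    using assms(3) that by (auto simp: tgt_win_def)
  have "(\<Sum>i\<in>{-int s..-1}. y i) = (\<Sum>i\<in>{-int s..-1}. y' i)"
    "y 0 = y' 0" "y (-1) = y' (-1)" "y (-int s - 1) = y' (-int s - 1)"
    using assms(1) by (auto intro!: sum.cong eq)
  with assms(1,2) show ?thesis by (auto simp: src_win_def Phi_at_inv_def Let_def intro!: eq)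
qed

lemma Phi_at_pos:
  assumes "K \<ge> 0" and "crosses n s x" and "\<forall>j\<in>src_win K s. x j \<ge> 1" and "i \<in> tgt_win K s"
  shows "Phi_at n s x i \<ge> 1"
proof -
  have pos: "x j \<ge> 1" if "-1-K \<le> j" "j \<le> int s + K" for j
    using assms(3) that by (auto simp: src_win_def)
  have "x 0 \<ge> 1" "x (-1) \<ge> 1" using assms(1) by (auto intro!: pos)
  with assms show ?thesis by (auto simp: tgt_win_def Phi_at_def crosses_def Let_def intro!: pos)
qed

lemma Phi_at_inv_pos:
  assumes "K \<ge> 0" and "crosses_back n s y" and "\<forall>i\<in>tgt_win K s. y i \<ge> 1" and "j \<in> src_win K s"
  shows "Phi_at_inv n s y j \<ge> 1"
proof -
  have pos: "y i \<ge> 1" if "-int s-1-K \<le> i" "i \<le> K" for i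
    using assms(3) that by (auto simp: tgt_win_def)
  have y: "y 0 \<ge> 1" "y (-1) \<ge> 1" "y (-int s - 1) \<ge> 1" using assms(1) by (auto intro!: pos)
  have "(\<Sum>i\<in>{-int s-1..-1}. y i) = y (-int s - 1) + (\<Sum>i\<in>{-int s..-1}. y i)" if "s > 0"
    using that by (subst sum_int_ivl_first) auto
  with assms y show ?thesis
    by (cases "s = 0") (auto simp: src_win_def Phi_at_inv_def crosses_back_iff Let_def intro!: pos)
qed

lemma card_tgt_win: "card (tgt_win K s) = card (src_win K s)"
  by (simp add: src_win_def tgt_win_def)

text \<open>Away from the three coordinates \<open>-s-1, -1, 0\<close>, which absorb the crossing,
  \<^const>\<open>Phi_at\<close> only moves coordinates around; on those three it preserves the sum.\<close>

lemma sum_Phi_at: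
  assumes "K \<ge> 0"
  shows "(\<Sum>i\<in>tgt_win K s. Phi_at n s x i) = (\<Sum>j\<in>src_win K s. x j)"
proof -
  let ?T = "{-int s - 1, -1, 0}" and ?S = "{-1, 0, int s}"
  have T: "?T \<subseteq> tgt_win K s" and S: "?S \<subseteq> src_win K s"
    using assms by (auto simp: tgt_win_def src_win_def)
  have "(\<Sum>i\<in>tgt_win K s - ?T. Phi_at n s x i) = (\<Sum>j\<in>src_win K s - ?S. x j)"
    by (rule sum.reindex_bij_witness[where j="\<lambda>i. if -int s \<le> i \<and> i \<le> -2 then i + int s + 1 else i + int s"
          and i="\<lambda>j. if 1 \<le> j \<and> j \<le> int s - 1 then j - int s - 1 else j - int s"])
      (use assms in \<open>auto simp: tgt_win_def src_win_def Phi_at_def Let_def add_ac Suc_le_eq\<close>)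
  moreover have "(\<Sum>i\<in>?T. Phi_at n s x i) = (\<Sum>j\<in>?S. x j)"
  proof (cases "s = 0")
    case True
    then show ?thesis by (simp add: Phi_at_def)
  next
    case False
    have "(\<Sum>j\<in>{0..int s}. x j) = (\<Sum>j\<in>{0..int s - 1}. x j) + x (int s)"
      using False by (subst sum_int_ivl_last) auto
    with False show ?thesis by (simp add: Phi_at_def)
  qed
  ultimately show ?thesis
    using sum.subset_diff[OF T, of "Phi_at n s x"] sum.subset_diff[OF S, of x]
    by (simp add: tgt_win_def src_win_def)
qed

subsection \<open>Geometric weights and the block bijection\<close>

definition geom_mass :: "real \<Rightarrow> int \<Rightarrow> real" where
  "geom_mass p k = (if k \<ge> 1 then (1 - p) ^ nat (k - 1) * p else 0)"

lemma geom_mass_nonneg: "0 \<le> p \<Longrightarrow> p \<le> 1 \<Longrightarrow> 0 \<le> geom_mass p k"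
  by (simp add: geom_mass_def)

lemma prod_geom_mass:
  assumes "finite A" and "\<forall>i\<in>A. x i \<ge> 1"
  shows "(\<Prod>i\<in>A. geom_mass p (x i)) = (1 - p) ^ nat ((\<Sum>i\<in>A. x i) - int (card A)) * p ^ card A"
proof -
  have "int (\<Sum>i\<in>A. nat (x i - 1)) = (\<Sum>i\<in>A. x i - 1)"
    unfolding of_nat_sum using assms(2) by (intro sum.cong) auto
  also have "\<dots> = (\<Sum>i\<in>A. x i) - int (card A)"
    by (simp add: sum_subtractf)
  finally have exp: "(\<Sum>i\<in>A. nat (x i - 1)) = nat ((\<Sum>i\<in>A. x i) - int (card A))"
    by (metis nat_int)
  have "(\<Prod>i\<in>A. geom_mass p (x i)) = (\<Prod>i\<in>A. (1 - p) ^ nat (x i - 1) * p)"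
    using assms(2) by (intro prod.cong) (auto simp: geom_mass_def)
  also have "\<dots> = (1 - p) ^ (\<Sum>i\<in>A. nat (x i - 1)) * p ^ card A"
    by (simp add: prod.distrib power_sum)
  finally show ?thesis unfolding exp .
qed

lemma prod_geom_mass_Phi_at:
  assumes "K \<ge> 0" and "crosses n s x" and "\<forall>j\<in>src_win K s. x j \<ge> 1"
  shows "(\<Prod>i\<in>tgt_win K s. geom_mass p (Phi_at n s x i)) = (\<Prod>j\<in>src_win K s. geom_mass p (x j))"
  using Phi_at_pos[OF assms] sum_Phi_at[OF assms(1)] card_tgt_win assms(3)
  by (simp add: prod_geom_mass tgt_win_def src_win_def)

definition src_block :: "nat \<Rightarrow> nat \<Rightarrow> int \<Rightarrow> int set \<Rightarrow> (int \<Rightarrow> int) \<Rightarrow> (int \<Rightarrow> int) set" where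
  "src_block n s K J a = {x \<in> src_win K s \<rightarrow>\<^sub>E UNIV.
     (\<forall>j\<in>src_win K s. x j \<ge> 1) \<and> crosses n s x \<and> (\<forall>j\<in>J. Phi_at n s x j = a j)}"

definition tgt_block :: "nat \<Rightarrow> nat \<Rightarrow> int \<Rightarrow> int set \<Rightarrow> (int \<Rightarrow> int) \<Rightarrow> (int \<Rightarrow> int) set" where
  "tgt_block n s K J a = {y \<in> tgt_win K s \<rightarrow>\<^sub>E UNIV.
     (\<forall>i\<in>tgt_win K s. y i \<ge> 1) \<and> crosses_back n s y \<and> (\<forall>j\<in>J. y j = a j)}"

lemma bij_betw_blocks:
  assumes K: "K \<ge> 0" and J: "J \<subseteq> {-K..K}"
  shows "bij_betw (\<lambda>x. restrict (Phi_at n s x) (tgt_win K s)) (src_block n s K J a) (tgt_block n s K J a)"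
proof (rule bij_betw_byWitness[where f'="\<lambda>y. restrict (Phi_at_inv n s y) (src_win K s)"])
  have J_tgt: "J \<subseteq> tgt_win K s" using J by (auto simp: tgt_win_def)
  have src: "0 \<in> src_win K s" "-1 \<in> src_win K s" "{0..int s} \<subseteq> src_win K s"
    using K by (auto simp: src_win_def)
  have tgt: "0 \<in> tgt_win K s" "-1 \<in> tgt_win K s" "{-int s - 1..-1} \<subseteq> tgt_win K s"
    using K by (auto simp: tgt_win_def)
  have Phi_at_restrict: "Phi_at n s (restrict x (src_win K s)) i = Phi_at n s x i"
    if "i \<in> tgt_win K s" for x i
    by (rule Phi_at_local[OF K that]) simp
  have Phi_at_inv_restrict: "Phi_at_inv n s (restrict y (tgt_win K s)) j = Phi_at_inv n s y j"
    if "j \<in> src_win K s" for y j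
    by (rule Phi_at_inv_local[OF K that]) simp
  have restrict_eqI: "restrict f A = x" if "\<forall>j\<in>A. f j = x j" "x \<in> A \<rightarrow>\<^sub>E UNIV" for f x :: "int \<Rightarrow> int" and A
    using that by (metis PiE_restrict restrict_ext)
  show "\<forall>x\<in>src_block n s K J a. restrict (Phi_at_inv n s (restrict (Phi_at n s x) (tgt_win K s))) (src_win K s) = x"
    by (auto simp: src_block_def Phi_at_inv_restrict Phi_at_inv_Phi_at intro!: restrict_eqI)
  show "\<forall>y\<in>tgt_block n s K J a. restrict (Phi_at n s (restrict (Phi_at_inv n s y) (src_win K s))) (tgt_win K s) = y"
    by (auto simp: tgt_block_def Phi_at_restrict Phi_at_Phi_at_inv intro!: restrict_eqI)
  show "(\<lambda>x. restrict (Phi_at n s x) (tgt_win K s)) ` src_block n s K J a \<subseteq> tgt_block n s K J a"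
  proof (rule image_subsetI)
    fix x assume "x \<in> src_block n s K J a"
    then have cr: "crosses n s x" and pos: "\<forall>j\<in>src_win K s. x j \<ge> 1" and "\<forall>j\<in>J. Phi_at n s x j = a j"
      by (auto simp: src_block_def)
    moreover have "crosses_back n s (restrict (Phi_at n s x) (tgt_win K s))"
      using crosses_back_Phi_at[OF cr] pos src tgt
      by (subst crosses_back_local[where y'="Phi_at n s x"]) auto
    ultimately show "restrict (Phi_at n s x) (tgt_win K s) \<in> tgt_block n s K J a"
      using Phi_at_pos[OF K cr pos] J_tgt by (auto simp: tgt_block_def)
  qed
  show "(\<lambda>y. restrict (Phi_at_inv n s y) (src_win K s)) ` tgt_block n s K J a \<subseteq> src_block n s K J a"
  proof (rule image_subsetI)
    fix y assume "y \<in> tgt_block n s K J a"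
    then have cr: "crosses_back n s y" and pos: "\<forall>i\<in>tgt_win K s. y i \<ge> 1" and "\<forall>j\<in>J. y j = a j"
      by (auto simp: tgt_block_def)
    moreover have "crosses n s (restrict (Phi_at_inv n s y) (src_win K s))"
      using crosses_Phi_at_inv[OF cr] pos src tgt
      by (subst crosses_local[where x'="Phi_at_inv n s y"]) auto
    moreover have "Phi_at n s (restrict (Phi_at_inv n s y) (src_win K s)) j = y j" if "j \<in> J" for j
      using that J_tgt by (simp add: Phi_at_restrict Phi_at_Phi_at_inv subset_iff)
    ultimately show "restrict (Phi_at_inv n s y) (src_win K s) \<in> src_block n s K J a"
      using Phi_at_inv_pos[OF K cr pos] by (auto simp: src_block_def)
  qed
qed

lemma nn_integral_blocks:
  assumes "K \<ge> 0" and "J \<subseteq> {-K..K}"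
  shows "(\<integral>\<^sup>+x. ennreal (\<Prod>j\<in>src_win K s. geom_mass p (x j)) \<partial>count_space (src_block n s K J a))
       = (\<integral>\<^sup>+y. ennreal (\<Prod>i\<in>tgt_win K s. geom_mass p (y i)) \<partial>count_space (tgt_block n s K J a))"
proof -
  have "(\<integral>\<^sup>+x. ennreal (\<Prod>j\<in>src_win K s. geom_mass p (x j)) \<partial>count_space (src_block n s K J a))
      = (\<integral>\<^sup>+x. ennreal (\<Prod>i\<in>tgt_win K s. geom_mass p (restrict (Phi_at n s x) (tgt_win K s) i))
           \<partial>count_space (src_block n s K J a))"
    using prod_geom_mass_Phi_at[OF assms(1)] by (intro nn_integral_cong) (simp add: src_block_def)
  also have "\<dots> = (\<integral>\<^sup>+y. ennreal (\<Prod>i\<in>tgt_win K s. geom_mass p (y i)) \<partial>count_space (tgt_block n s K J a))"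
    by (rule nn_integral_bij_count_space[OF bij_betw_blocks[OF assms]])
  finally show ?thesis .
qed

lemma restrict_in_src_block_iff:
  assumes "K \<ge> 0" and "J \<subseteq> {-K..K}"
  shows "restrict x (src_win K s) \<in> src_block n s K J a \<longleftrightarrow>
     (\<forall>j\<in>src_win K s. x j \<ge> 1) \<and> crosses n s x \<and> (\<forall>j\<in>J. Phi_at n s x j = a j)"
proof -
  have "crosses n s (restrict x (src_win K s)) = crosses n s x"
    by (rule crosses_local) (use assms(1) in \<open>auto simp: src_win_def\<close>)
  moreover have "Phi_at n s (restrict x (src_win K s)) j = Phi_at n s x j" if "j \<in> J" for j
    by (rule Phi_at_local[OF assms(1)]) (use that assms(2) in \<open>auto simp: tgt_win_def\<close>)
  ultimately show ?thesis by (auto simp: src_block_def)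
qed

lemma restrict_in_tgt_block_iff:
  assumes "K \<ge> 0" and "J \<subseteq> {-K..K}"
  shows "restrict y (tgt_win K s) \<in> tgt_block n s K J a \<longleftrightarrow>
     (\<forall>i\<in>tgt_win K s. y i \<ge> 1) \<and> crosses_back n s y \<and> (\<forall>j\<in>J. y j = a j)"
proof -
  have "crosses_back n s (restrict y (tgt_win K s)) = crosses_back n s y"
    by (rule crosses_back_local) (use assms(1) in \<open>auto simp: tgt_win_def\<close>)
  moreover have "J \<subseteq> tgt_win K s" using assms(2) by (auto simp: tgt_win_def)
  ultimately show ?thesis by (auto simp: tgt_block_def)
qed

lemma Phi_at_local_late:
  assumes "K \<ge> 0" and "int s > K" and "j \<in> {-K..K}" and "\<forall>i\<in>{0..int s + K}. x i = x' i"
  shows "Phi_at n s x j = Phi_at n s x' j"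
proof -
  have "(\<Sum>i\<in>{0..int s}. x i) = (\<Sum>i\<in>{0..int s}. x' i)"
    "(\<Sum>i\<in>{0..int s - 1}. x i) = (\<Sum>i\<in>{0..int s - 1}. x' i)"
    using assms(1,4) by (auto intro!: sum.cong)
  with assms show ?thesis by (auto simp: Phi_at_def Let_def)
qed

definition late_Phi_cylinder :: "nat \<Rightarrow> int \<Rightarrow> int set \<Rightarrow> (int \<Rightarrow> int) \<Rightarrow> (int \<Rightarrow> int) \<Rightarrow> bool" where
  "late_Phi_cylinder n K J a g \<longleftrightarrow>
     (\<forall>j\<in>{0..int n}. g j \<ge> 1) \<and> K < s_idx n g \<and> (\<forall>j\<in>J. Phi n g j = a j)"

lemma late_Phi_cylinder_restrict:
  assumes "K \<ge> 0" and "J \<subseteq> {-K..K}"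
  shows "late_Phi_cylinder n K J a (restrict g {0..int n + K}) = late_Phi_cylinder n K J a g"
proof (cases "\<forall>j\<in>{0..int n}. g j \<ge> 1")
  case pos: True
  let ?g' = "restrict g {0..int n + K}"
  have pos': "\<forall>j\<in>{0..int n}. ?g' j \<ge> 1" using pos assms(1) by auto
  define s where "s = nat (s_idx n g)"
  have s: "s \<le> n" "crosses n s g" using crosses_s_idx[OF pos] by (simp_all add: s_def)
  have "crosses n s ?g'" using s assms(1) by (subst crosses_local[where x'=g]) auto
  then have "nat (s_idx n ?g') = s" using crosses_iff_s_idx[OF pos' s(1)] by blast
  then have s_idx_eq: "s_idx n ?g' = s_idx n g" by (simp add: s_def s_idx_def)
  have "Phi n ?g' j = Phi n g j" if "K < s_idx n g" "j \<in> J" for j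
    unfolding Phi_eq_Phi_at s_idx_eq
    by (rule Phi_at_local_late[OF assms(1)]) (use that assms(2) s in \<open>auto simp: s_def\<close>)
  then show ?thesis using pos pos' s_idx_eq by (auto simp: late_Phi_cylinder_def)
next
  case False
  then show ?thesis using assms(1) by (auto simp: late_Phi_cylinder_def)
qed

lemma (in prob_space) prob_eq_sum_AE_partition:
  assumes "finite S" and [measurable]: "A \<in> events" "\<And>s. s \<in> S \<Longrightarrow> E s \<in> events"
    and cover: "AE \<omega> in M. \<omega> \<in> A \<longleftrightarrow> (\<exists>s\<in>S. \<omega> \<in> E s)"
    and disj: "AE \<omega> in M. \<forall>s\<in>S. \<forall>t\<in>S. \<omega> \<in> E s \<longrightarrow> \<omega> \<in> E t \<longrightarrow> s = t"
  shows "prob A = (\<Sum>s\<in>S. prob (E s))"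
proof -
  define D where "D = {\<omega>\<in>space M. \<forall>s\<in>S. \<forall>t\<in>S. \<omega> \<in> E s \<longrightarrow> \<omega> \<in> E t \<longrightarrow> s = t}"
  have D_sets[measurable]: "D \<in> events" unfolding D_def using \<open>finite S\<close> by measurable
  have AE_D: "AE \<omega> in M. \<omega> \<in> D"
    using disj AE_space by eventually_elim (auto simp: D_def)
  have "(\<Union>s\<in>S. E s \<inter> D) \<in> events"
    using assms(1,3) D_sets by (intro sets.finite_UN) auto
  then have "prob A = prob (\<Union>s\<in>S. E s \<inter> D)"
    using cover AE_D by (intro measure_eq_AE) auto
  also have "\<dots> = (\<Sum>s\<in>S. prob (E s \<inter> D))"
    using \<open>finite S\<close> by (intro finite_measure_finite_Union) (auto simp: disjoint_family_on_def D_def)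
  also have "\<dots> = (\<Sum>s\<in>S. prob (E s))"
    using AE_D by (intro sum.cong refl measure_eq_AE) auto
  finally show ?thesis .
qed

lemma (in prob_space) tendsto_prob_gt:
  assumes [measurable]: "f \<in> M \<rightarrow>\<^sub>M count_space UNIV"
  shows "(\<lambda>n. prob {\<omega>\<in>space M. int n < f \<omega>}) \<longlonglongrightarrow> 0"
proof -
  have "(\<lambda>n. prob {\<omega>\<in>space M. int n < f \<omega>}) \<longlonglongrightarrow> prob (\<Inter>n. {\<omega>\<in>space M. int n < f \<omega>})"
    by (intro finite_Lim_measure_decseq) (auto simp: decseq_def)
  moreover have "(\<Inter>n. {\<omega>\<in>space M. int n < f \<omega>}) = {}"
  proof -
    have "\<not> int (nat (f \<omega>)) < f \<omega>" for \<omega> by linarith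
    then show ?thesis by blast
  qed
  ultimately show ?thesis by simp
qed

locale random_int_seq = prob_space M for M :: "'a measure" +
  fixes X :: "'a \<Rightarrow> int \<Rightarrow> int"
  assumes measurable_coord[measurable]: "(\<lambda>\<omega>. X \<omega> j) \<in> M \<rightarrow>\<^sub>M count_space UNIV"
begin

lemma window_event_eq_UN:
  assumes "S \<subseteq> V \<rightarrow>\<^sub>E UNIV"
  shows "{\<omega>\<in>space M. restrict (X \<omega>) V \<in> S} = (\<Union>a\<in>S. {\<omega>\<in>space M. \<forall>j\<in>V. X \<omega> j = a j})"
proof (intro equalityI subsetI)
  fix \<omega> assume "\<omega> \<in> {\<omega>\<in>space M. restrict (X \<omega>) V \<in> S}"
  then show "\<omega> \<in> (\<Union>a\<in>S. {\<omega>\<in>space M. \<forall>j\<in>V. X \<omega> j = a j})"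
    by (intro UN_I[of "restrict (X \<omega>) V"]) auto
next
  fix \<omega> assume "\<omega> \<in> (\<Union>a\<in>S. {\<omega>\<in>space M. \<forall>j\<in>V. X \<omega> j = a j})"
  then obtain a where "a \<in> S" "\<omega> \<in> space M" "\<forall>j\<in>V. X \<omega> j = a j" by auto
  moreover from \<open>a \<in> S\<close> assms have "a \<in> V \<rightarrow>\<^sub>E UNIV" by blast
  ultimately show "\<omega> \<in> {\<omega>\<in>space M. restrict (X \<omega>) V \<in> S}"
    by (metis (mono_tags, lifting) PiE_restrict mem_Collect_eq restrict_ext)
qed

lemma window_event_sets:
  assumes "finite V" and "S \<subseteq> V \<rightarrow>\<^sub>E UNIV"
  shows "{\<omega>\<in>space M. restrict (X \<omega>) V \<in> S} \<in> events"
proof -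
  have "countable S" using countable_PiE[OF assms(1), of "\<lambda>_. UNIV :: int set"] assms(2)
    by (auto intro: countable_subset)
  then show ?thesis unfolding window_event_eq_UN[OF assms(2)]
    using assms(1) by (intro sets.countable_UN') auto
qed

lemma measurable_seq[measurable]: "X \<in> M \<rightarrow>\<^sub>M Pi\<^sub>M UNIV (\<lambda>_. count_space UNIV)"
proof -
  have "(\<lambda>\<omega> i. X \<omega> i) \<in> M \<rightarrow>\<^sub>M Pi\<^sub>M UNIV (\<lambda>_. count_space UNIV)"
    by (rule measurable_PiM_single') auto
  then show ?thesis by simp
qed

lemma measurable_window_fun:
  assumes "finite V" and "\<And>g. f (restrict g V) = f g"
  shows "(\<lambda>\<omega>. f (X \<omega>)) \<in> M \<rightarrow>\<^sub>M count_space UNIV"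
proof (rule measurableI)
  fix B
  have "(\<lambda>\<omega>. f (X \<omega>)) -` B \<inter> space M = {\<omega>\<in>space M. restrict (X \<omega>) V \<in> {x \<in> V \<rightarrow>\<^sub>E UNIV. f x \<in> B}}"
    using assms(2) by auto
  also have "\<dots> \<in> sets M" by (rule window_event_sets[OF assms(1)]) auto
  finally show "(\<lambda>\<omega>. f (X \<omega>)) -` B \<inter> space M \<in> sets M" .
qed simp

lemma measurable_sum_coords:
  "finite V \<Longrightarrow> (\<lambda>\<omega>. \<Sum>j\<in>V. X \<omega> j) \<in> M \<rightarrow>\<^sub>M count_space UNIV"
  by (rule measurable_window_fun) (auto intro: sum.cong)

lemma measurable_s_idx[measurable]: "(\<lambda>\<omega>. nat (s_idx n (X \<omega>))) \<in> M \<rightarrow>\<^sub>M count_space UNIV"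
proof -
  have [measurable]: "(\<lambda>\<omega>. \<Sum>j\<in>{0..int s}. X \<omega> j) \<in> M \<rightarrow>\<^sub>M count_space UNIV" for s
    by (simp add: measurable_sum_coords)
  show ?thesis unfolding s_idx_def nat_int by measurable
qed

lemma measurable_Phi_coord[measurable]: "(\<lambda>\<omega>. Phi n (X \<omega>) i) \<in> M \<rightarrow>\<^sub>M count_space UNIV"
proof -
  have [measurable]: "(\<lambda>\<omega>. Phi_at n s (X \<omega>) i) \<in> M \<rightarrow>\<^sub>M count_space UNIV" for s
  proof (rule measurable_window_fun[where V="src_win \<bar>i\<bar> s"])
    show "Phi_at n s (restrict g (src_win \<bar>i\<bar> s)) i = Phi_at n s g i" for g
      by (rule Phi_at_local[where K="\<bar>i\<bar>"]) (auto simp: tgt_win_def)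
  qed (simp add: src_win_def)
  show ?thesis unfolding Phi_eq_Phi_at
    by (rule measurable_compose_countable'[where I=UNIV, OF _ measurable_s_idx]) simp_all
qed

lemma random_int_seq_Phi: "random_int_seq M (\<lambda>\<omega>. Phi n (X \<omega>))"
  by unfold_locales (rule measurable_Phi_coord)

lemma emeasure_window:
  assumes "finite V" and "S \<subseteq> V \<rightarrow>\<^sub>E UNIV"
  shows "emeasure M {\<omega>\<in>space M. restrict (X \<omega>) V \<in> S}
      = (\<integral>\<^sup>+a. emeasure M {\<omega>\<in>space M. \<forall>j\<in>V. X \<omega> j = a j} \<partial>count_space S)"
  unfolding window_event_eq_UN[OF assms(2)]
proof (rule emeasure_UN_countable)
  show "countable S" using countable_PiE[OF assms(1), of "\<lambda>_. UNIV :: int set"] assms(2)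
    by (auto intro: countable_subset)
  show "disjoint_family_on (\<lambda>a. {\<omega>\<in>space M. \<forall>j\<in>V. X \<omega> j = a j}) S"
    unfolding disjoint_family_on_def
  proof (intro ballI impI)
    fix a b assume ab: "a \<in> S" "b \<in> S" "a \<noteq> b"
    with assms(2) obtain j where "j \<in> V" "a j \<noteq> b j"
      by (metis PiE_ext subsetD)
    then show "{\<omega>\<in>space M. \<forall>j\<in>V. X \<omega> j = a j} \<inter> {\<omega>\<in>space M. \<forall>j\<in>V. X \<omega> j = b j} = {}"
      by auto
  qed
qed (use assms(1) in measurable)

lemma emeasure_window_eq:
  assumes "random_int_seq N Y" and V: "finite V" "S \<subseteq> V \<rightarrow>\<^sub>E UNIV"
    and cyl: "\<And>a. prob {\<omega>\<in>space M. \<forall>j\<in>V. X \<omega> j = a j} = measure N {\<omega>\<in>space N. \<forall>j\<in>V. Y \<omega> j = a j}"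
  shows "emeasure M {\<omega>\<in>space M. restrict (X \<omega>) V \<in> S} = emeasure N {\<omega>\<in>space N. restrict (Y \<omega>) V \<in> S}"
proof -
  interpret N: random_int_seq N Y by fact
  show ?thesis
    unfolding emeasure_window[OF V] N.emeasure_window[OF V]
    using cyl by (simp add: emeasure_eq_measure N.emeasure_eq_measure)
qed

lemma seq_law_eq_iff:
  assumes "random_int_seq N Y"
  shows "seq_law M X = seq_law N Y \<longleftrightarrow> (\<forall>J a. finite J \<longrightarrow>
     prob {\<omega>\<in>space M. \<forall>j\<in>J. X \<omega> j = a j} = measure N {\<omega>\<in>space N. \<forall>j\<in>J. Y \<omega> j = a j})"
proof -
  interpret N: random_int_seq N Y by fact
  have cyl: "Z -` prod_emb UNIV (\<lambda>_. count_space UNIV) J (PiE J A) \<inter> space L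
      = {\<omega>\<in>space L. restrict (Z \<omega>) J \<in> PiE J A}"
    for Z :: "'c \<Rightarrow> int \<Rightarrow> int" and L :: "'c measure" and J A by (auto simp: prod_emb_def)
  have emb: "prod_emb UNIV (\<lambda>_. count_space UNIV) J (PiE J A) \<in> sets (Pi\<^sub>M UNIV (\<lambda>_. count_space UNIV))"
    if "finite J" for J and A :: "int \<Rightarrow> int set" using that by (intro sets_PiM_I) auto
  show ?thesis
  proof (intro iffI allI impI)
    fix J :: "int set" and a :: "int \<Rightarrow> int"
    assume law: "seq_law M X = seq_law N Y" and J: "finite J"
    from arg_cong[OF law, of "\<lambda>L. measure L (prod_emb UNIV (\<lambda>_. count_space UNIV) J (PiE J (\<lambda>j. {a j})))"]
    show "prob {\<omega>\<in>space M. \<forall>j\<in>J. X \<omega> j = a j} = measure N {\<omega>\<in>space N. \<forall>j\<in>J. Y \<omega> j = a j}"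
      by (simp add: seq_law_def measure_distr emb[OF J] cyl Pi_iff)
  next
    assume fdd: "\<forall>J a. finite J \<longrightarrow>
      prob {\<omega>\<in>space M. \<forall>j\<in>J. X \<omega> j = a j} = measure N {\<omega>\<in>space N. \<forall>j\<in>J. Y \<omega> j = a j}"
    show "seq_law M X = seq_law N Y"
      unfolding seq_law_def
    proof (rule measure_eqI_PiM_infinite)
      show "finite_measure (distr M (Pi\<^sub>M UNIV (\<lambda>_. count_space UNIV)) X)"
        using prob_space_distr[OF measurable_seq] by (simp add: prob_space_def)
      fix J :: "int set" and A :: "int \<Rightarrow> int set" assume J: "finite J"
      have "emeasure M {\<omega>\<in>space M. restrict (X \<omega>) J \<in> PiE J A}
          = emeasure N {\<omega>\<in>space N. restrict (Y \<omega>) J \<in> PiE J A}"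
        using fdd J by (intro emeasure_window_eq[OF assms]) (auto simp: PiE_iff)
      then show "emeasure (distr M (Pi\<^sub>M UNIV (\<lambda>_. count_space UNIV)) X) (prod_emb UNIV (\<lambda>_. count_space UNIV) J (PiE J A))
          = emeasure (distr N (Pi\<^sub>M UNIV (\<lambda>_. count_space UNIV)) Y) (prod_emb UNIV (\<lambda>_. count_space UNIV) J (PiE J A))"
        by (simp add: emeasure_distr emb[OF J] cyl)
    qed simp_all
  qed
qed

definition iid_geom_on :: "real \<Rightarrow> int set \<Rightarrow> bool" where
  "iid_geom_on p I \<longleftrightarrow> (\<forall>V a. finite V \<longrightarrow> V \<subseteq> I \<longrightarrow>
     prob {\<omega>\<in>space M. \<forall>j\<in>V. X \<omega> j = a j} = (\<Prod>j\<in>V. geom_mass p (a j)))"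

lemma iid_geom_onD:
  "iid_geom_on p I \<Longrightarrow> finite V \<Longrightarrow> V \<subseteq> I \<Longrightarrow>
     prob {\<omega>\<in>space M. \<forall>j\<in>V. X \<omega> j = a j} = (\<Prod>j\<in>V. geom_mass p (a j))"
  by (simp add: iid_geom_on_def)

lemma iid_geom_on_subset: "iid_geom_on p I \<Longrightarrow> I' \<subseteq> I \<Longrightarrow> iid_geom_on p I'"
  unfolding iid_geom_on_def by blast

lemma emeasure_window_iid_geom:
  assumes "iid_geom_on p I" and "finite V" and "V \<subseteq> I" and "S \<subseteq> V \<rightarrow>\<^sub>E UNIV"
  shows "emeasure M {\<omega>\<in>space M. restrict (X \<omega>) V \<in> S}
      = (\<integral>\<^sup>+x. ennreal (\<Prod>j\<in>V. geom_mass p (x j)) \<partial>count_space S)"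
  unfolding emeasure_window[OF assms(2,4)]
  using iid_geom_onD[OF assms(1-3)] by (simp add: emeasure_eq_measure)

lemma AE_pos_iid_geom:
  assumes "iid_geom_on p I"
  shows "AE \<omega> in M. \<forall>j\<in>I. X \<omega> j \<ge> 1"
proof -
  have "AE \<omega> in M. X \<omega> j \<noteq> k" if "j \<in> I" "k < 1" for j k
  proof -
    have "prob {\<omega>\<in>space M. X \<omega> j = k} = 0"
      using iid_geom_onD[OF assms, of "{j}" "\<lambda>_. k"] that by (simp add: geom_mass_def)
    then have "{\<omega>\<in>space M. X \<omega> j = k} \<in> null_sets M"
      by (simp add: null_sets_def emeasure_eq_measure)
    from AE_not_in[OF this] AE_space show ?thesis by eventually_elim auto
  qed
  then have "AE \<omega> in M. \<forall>j k. j \<in> I \<longrightarrow> k < 1 \<longrightarrow> X \<omega> j \<noteq> k"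
    by (simp add: AE_all_countable)
  then show ?thesis by eventually_elim (auto simp: not_less[symmetric])
qed

lemma prob_window_eq:
  assumes N: "random_int_seq N Y" and iid: "iid_geom_on p I" "random_int_seq.iid_geom_on N Y p I"
    and V: "finite V" "V \<subseteq> I" and Q: "\<And>g. Q (restrict g V) = Q g"
  shows "prob {\<omega>\<in>space M. Q (X \<omega>)} = measure N {\<omega>\<in>space N. Q (Y \<omega>)}"
proof -
  interpret N: random_int_seq N Y by fact
  let ?S = "{x \<in> V \<rightarrow>\<^sub>E UNIV. Q x}"
  have "{\<omega>\<in>space M. Q (X \<omega>)} = {\<omega>\<in>space M. restrict (X \<omega>) V \<in> ?S}"
    "{\<omega>\<in>space N. Q (Y \<omega>)} = {\<omega>\<in>space N. restrict (Y \<omega>) V \<in> ?S}"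
    using Q by auto
  moreover have "emeasure M {\<omega>\<in>space M. restrict (X \<omega>) V \<in> ?S} = emeasure N {\<omega>\<in>space N. restrict (Y \<omega>) V \<in> ?S}"
    using iid_geom_onD[OF iid(1) V] N.iid_geom_onD[OF iid(2) V] by (intro emeasure_window_eq[OF N V(1)]) auto
  ultimately show ?thesis by (simp add: measure_def)
qed

lemma iid_geom_on_if_indep:
  assumes indep: "indep_vars (\<lambda>_. count_space UNIV) (\<lambda>i \<omega>. X \<omega> i) I"
    and geom: "\<forall>i\<in>I. geom_pos_rv M p (\<lambda>\<omega>. X \<omega> i)"
  shows "iid_geom_on p I"
  unfolding iid_geom_on_def
proof (intro allI impI)
  fix V a assume V: "finite V" "V \<subseteq> I"
  show "prob {\<omega>\<in>space M. \<forall>j\<in>V. X \<omega> j = a j} = (\<Prod>j\<in>V. geom_mass p (a j))"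
  proof (cases "V = {}")
    case False
    have "{\<omega>\<in>space M. \<forall>j\<in>V. X \<omega> j = a j} = (\<Inter>j\<in>V. (\<lambda>\<omega>. X \<omega> j) -` {a j} \<inter> space M)"
      using False by auto
    also have "prob \<dots> = (\<Prod>j\<in>V. prob ((\<lambda>\<omega>. X \<omega> j) -` {a j} \<inter> space M))"
      by (rule indep_varsD[OF indep False V]) simp
    also have "\<dots> = (\<Prod>j\<in>V. geom_mass p (a j))"
      using geom V by (intro prod.cong refl) (auto simp: geom_pos_rv_def geom_mass_def vimage_def Int_def conj_commute)
    finally show ?thesis .
  qed (simp add: prob_space)
qed

end

definition geom_pos_pmf :: "real \<Rightarrow> int pmf" where
  "geom_pos_pmf p = map_pmf (\<lambda>k. int k + 1) (geometric_pmf p)"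

lemma pmf_geom_pos_pmf:
  assumes "0 < p" "p \<le> 1"
  shows "pmf (geom_pos_pmf p) k = geom_mass p k"
proof (cases "k \<ge> 1")
  case True
  have "inj (\<lambda>k::nat. int k + 1)" by (auto simp: inj_on_def)
  then have "pmf (geom_pos_pmf p) (int (nat (k - 1)) + 1) = pmf (geometric_pmf p) (nat (k - 1))"
    unfolding geom_pos_pmf_def by (rule pmf_map_inj')
  with True assms show ?thesis by (simp add: geom_mass_def)
next
  case False
  then have "pmf (geom_pos_pmf p) k = 0"
    unfolding geom_pos_pmf_def by (intro pmf_map_outside) auto
  with False show ?thesis by (simp add: geom_mass_def)
qed

definition iid_geom_seq :: "real \<Rightarrow> (int \<Rightarrow> int) measure" where
  "iid_geom_seq p = Pi\<^sub>M UNIV (\<lambda>_. measure_pmf (geom_pos_pmf p))"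

lemma random_int_seq_iid_geom_seq: "random_int_seq (iid_geom_seq p) (\<lambda>\<omega>. \<omega>)"
proof (intro random_int_seq.intro random_int_seq_axioms.intro)
  show "prob_space (iid_geom_seq p)"
    unfolding iid_geom_seq_def by (intro prob_space_PiM prob_space_measure_pmf)
  fix j
  have "(\<lambda>\<omega>. \<omega> j) \<in> iid_geom_seq p \<rightarrow>\<^sub>M measure_pmf (geom_pos_pmf p)"
    unfolding iid_geom_seq_def by (rule measurable_component_singleton) simp
  then show "(\<lambda>\<omega>. \<omega> j) \<in> iid_geom_seq p \<rightarrow>\<^sub>M count_space UNIV"
    by (simp cong: measurable_cong_sets)
qed

interpretation iid_geom_seq: random_int_seq "iid_geom_seq p" "\<lambda>\<omega>. \<omega>"
  by (rule random_int_seq_iid_geom_seq)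

lemma iid_geom_on_iid_geom_seq:
  assumes "0 < p" "p \<le> 1"
  shows "iid_geom_seq.iid_geom_on p p UNIV"
  unfolding iid_geom_seq.iid_geom_on_def
proof (intro allI impI)
  fix V :: "int set" and a :: "int \<Rightarrow> int"
  assume V: "finite V"
  interpret product_prob_space "\<lambda>_::int. measure_pmf (geom_pos_pmf p)" UNIV ..
  have "{\<omega>\<in>space (iid_geom_seq p). \<forall>j\<in>V. \<omega> j = a j}
      = prod_emb UNIV (\<lambda>_. measure_pmf (geom_pos_pmf p)) V (PiE V (\<lambda>j. {a j}))"
    by (auto simp: prod_emb_def iid_geom_seq_def space_PiM PiE_iff)
  then have "emeasure (iid_geom_seq p) {\<omega>\<in>space (iid_geom_seq p). \<forall>j\<in>V. \<omega> j = a j}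
      = (\<Prod>j\<in>V. ennreal (geom_mass p (a j)))"
    using V by (simp add: iid_geom_seq_def emeasure_PiM_emb emeasure_pmf_single pmf_geom_pos_pmf[OF assms])
  also have "\<dots> = ennreal (\<Prod>j\<in>V. geom_mass p (a j))"
    using assms by (intro prod_ennreal) (simp add: geom_mass_nonneg)
  finally show "measure (iid_geom_seq p) {\<omega>\<in>space (iid_geom_seq p). \<forall>j\<in>V. \<omega> j = a j} = (\<Prod>j\<in>V. geom_mass p (a j))"
    using assms by (simp add: measure_def prod_nonneg geom_mass_nonneg)
qed

lemma (in random_int_seq) indep_if_iid_geom_on_UNIV:
  assumes p: "0 < p" "p \<le> 1" and iid: "iid_geom_on p UNIV"
  shows "indep_vars (\<lambda>_. count_space UNIV) (\<lambda>i \<omega>. X \<omega> i) UNIV \<and> (\<forall>i. geom_pos_rv M p (\<lambda>\<omega>. X \<omega> i))"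
proof
  have marginal: "prob {\<omega>\<in>space M. X \<omega> i = k} = geom_mass p k" for i k
    using iid_geom_onD[OF iid, of "{i}" "\<lambda>_. k"] by simp
  then show "\<forall>i. geom_pos_rv M p (\<lambda>\<omega>. X \<omega> i)"
    by (simp add: geom_pos_rv_def geom_mass_def)
  have "distr M (Pi\<^sub>M UNIV (\<lambda>_. count_space UNIV)) (\<lambda>\<omega>. \<lambda>i\<in>UNIV. X \<omega> i) = seq_law M X"
    by (simp add: seq_law_def restrict_UNIV)
  also have "\<dots> = seq_law (iid_geom_seq p) (\<lambda>\<omega>. \<omega>)"
    using iid_geom_onD[OF iid] iid_geom_seq.iid_geom_onD[OF iid_geom_on_iid_geom_seq[OF p]]
    by (subst seq_law_eq_iff[OF random_int_seq_iid_geom_seq]) simp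
  also have "\<dots> = iid_geom_seq p"
    unfolding seq_law_def iid_geom_seq_def by (rule distr_id2) (rule sets_PiM_cong, auto)
  also have "\<dots> = Pi\<^sub>M UNIV (\<lambda>i. distr M (count_space UNIV) (\<lambda>\<omega>. X \<omega> i))"
    unfolding iid_geom_seq_def
  proof (rule PiM_cong)
    fix i :: int
    show "measure_pmf (geom_pos_pmf p) = distr M (count_space UNIV) (\<lambda>\<omega>. X \<omega> i)"
    proof (rule measure_eqI_countable[where A=UNIV])
      fix k :: int
      have "emeasure (distr M (count_space UNIV) (\<lambda>\<omega>. X \<omega> i)) {k} = prob {\<omega>\<in>space M. X \<omega> i = k}"
        by (simp add: emeasure_distr emeasure_eq_measure vimage_def Int_def conj_commute)
      then show "emeasure (measure_pmf (geom_pos_pmf p)) {k} = emeasure (distr M (count_space UNIV) (\<lambda>\<omega>. X \<omega> i)) {k}"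
        by (simp add: emeasure_pmf_single pmf_geom_pos_pmf[OF p] marginal)
    qed auto
  qed simp
  finally show "indep_vars (\<lambda>_. count_space UNIV) (\<lambda>i \<omega>. X \<omega> i) UNIV"
    by (subst indep_vars_iff_distr_eq_PiM) auto
qed

subsection \<open>Invariance of the i.i.d. law\<close>

context random_int_seq
begin

lemma prob_src_block_eq_tgt_block:
  assumes "iid_geom_on p UNIV" and "K \<ge> 0" and "J \<subseteq> {-K..K}"
  shows "prob {\<omega>\<in>space M. restrict (X \<omega>) (src_win K s) \<in> src_block n s K J a}
       = prob {\<omega>\<in>space M. restrict (X \<omega>) (tgt_win K s) \<in> tgt_block n s K J a}"
proof -
  have src: "finite (src_win K s)" "src_block n s K J a \<subseteq> src_win K s \<rightarrow>\<^sub>E UNIV"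
    and tgt: "finite (tgt_win K s)" "tgt_block n s K J a \<subseteq> tgt_win K s \<rightarrow>\<^sub>E UNIV"
    by (auto simp: src_win_def tgt_win_def src_block_def tgt_block_def)
  show ?thesis
    unfolding measure_def emeasure_window_iid_geom[OF assms(1) src(1) subset_UNIV src(2)]
      emeasure_window_iid_geom[OF assms(1) tgt(1) subset_UNIV tgt(2)] nn_integral_blocks[OF assms(2,3)]
    by simp
qed

lemma prob_Phi_cylinder_eq_sum_src_blocks:
  assumes pos: "AE \<omega> in M. \<forall>j. X \<omega> j \<ge> 1" and K: "K \<ge> 0" and JK: "J \<subseteq> {-K..K}"
  shows "prob {\<omega>\<in>space M. \<forall>j\<in>J. Phi n (X \<omega>) j = a j}
      = (\<Sum>s\<le>n. prob {\<omega>\<in>space M. restrict (X \<omega>) (src_win K s) \<in> src_block n s K J a})"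
proof (rule prob_eq_sum_AE_partition)
  show "AE \<omega> in M. \<omega> \<in> {\<omega>\<in>space M. \<forall>j\<in>J. Phi n (X \<omega>) j = a j} \<longleftrightarrow>
      (\<exists>s\<in>{..n}. \<omega> \<in> {\<omega>\<in>space M. restrict (X \<omega>) (src_win K s) \<in> src_block n s K J a})"
    using pos AE_space
  proof eventually_elim
    case (elim \<omega>)
    then have pos0: "\<forall>j\<in>{0..int n}. X \<omega> j \<ge> 1" by auto
    show ?case
      using elim crosses_s_idx[OF pos0] crosses_iff_s_idx[OF pos0]
      by (auto simp: restrict_in_src_block_iff[OF K JK] Phi_eq_Phi_at)
  qed
  show "AE \<omega> in M. \<forall>s\<in>{..n}. \<forall>t\<in>{..n}.
      \<omega> \<in> {\<omega>\<in>space M. restrict (X \<omega>) (src_win K s) \<in> src_block n s K J a} \<longrightarrow>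
      \<omega> \<in> {\<omega>\<in>space M. restrict (X \<omega>) (src_win K t) \<in> src_block n t K J a} \<longrightarrow> s = t"
    using pos
  proof eventually_elim
    case (elim \<omega>)
    then have pos0: "\<forall>j\<in>{0..int n}. X \<omega> j \<ge> 1" by auto
    show ?case using crosses_iff_s_idx[OF pos0] by (auto simp: restrict_in_src_block_iff[OF K JK])
  qed
  show "{\<omega>\<in>space M. restrict (X \<omega>) (src_win K s) \<in> src_block n s K J a} \<in> events" for s
    by (rule window_event_sets) (auto simp: src_win_def src_block_def)
qed (use JK in \<open>auto intro: finite_subset\<close>)

lemma prob_cylinder_eq_sum_tgt_blocks:
  assumes pos: "AE \<omega> in M. \<forall>j. X \<omega> j \<ge> 1" and K: "K \<ge> 0" and JK: "J \<subseteq> {-K..K}"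
  shows "prob {\<omega>\<in>space M. \<forall>j\<in>J. X \<omega> j = a j}
      = (\<Sum>s\<le>n. prob {\<omega>\<in>space M. restrict (X \<omega>) (tgt_win K s) \<in> tgt_block n s K J a})"
proof (rule prob_eq_sum_AE_partition)
  show "AE \<omega> in M. \<omega> \<in> {\<omega>\<in>space M. \<forall>j\<in>J. X \<omega> j = a j} \<longleftrightarrow>
      (\<exists>s\<in>{..n}. \<omega> \<in> {\<omega>\<in>space M. restrict (X \<omega>) (tgt_win K s) \<in> tgt_block n s K J a})"
    using pos AE_space
  proof eventually_elim
    case (elim \<omega>)
    then have pos0: "\<forall>j\<in>{0..int n}. X \<omega> (-1 - j) \<ge> 1" by auto
    show ?case
      using elim crosses_s_idx[OF pos0]
      by (auto simp: restrict_in_tgt_block_iff[OF K JK] crosses_back_def)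
  qed
  show "AE \<omega> in M. \<forall>s\<in>{..n}. \<forall>t\<in>{..n}.
      \<omega> \<in> {\<omega>\<in>space M. restrict (X \<omega>) (tgt_win K s) \<in> tgt_block n s K J a} \<longrightarrow>
      \<omega> \<in> {\<omega>\<in>space M. restrict (X \<omega>) (tgt_win K t) \<in> tgt_block n t K J a} \<longrightarrow> s = t"
    using pos
  proof eventually_elim
    case (elim \<omega>)
    then have pos0: "\<forall>j\<in>{0..int n}. X \<omega> (-1 - j) \<ge> 1" by auto
    show ?case
      using crosses_iff_s_idx[OF pos0] by (auto simp: restrict_in_tgt_block_iff[OF K JK] crosses_back_def)
  qed
  show "{\<omega>\<in>space M. restrict (X \<omega>) (tgt_win K s) \<in> tgt_block n s K J a} \<in> events" for s
    by (rule window_event_sets) (auto simp: tgt_win_def tgt_block_def)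
qed (use JK in \<open>auto intro: finite_subset\<close>)

text \<open>Split according to the value \<open>s \<le> n\<close> of the crossing index; for each \<open>s\<close>, the two
  events correspond under the weight-preserving block bijection.\<close>

theorem prob_Phi_cylinder:
  assumes iid: "iid_geom_on p UNIV" and J: "finite J"
  shows "prob {\<omega>\<in>space M. \<forall>j\<in>J. Phi n (X \<omega>) j = a j} = prob {\<omega>\<in>space M. \<forall>j\<in>J. X \<omega> j = a j}"
proof -
  obtain K where K: "K \<ge> 0" and JK: "J \<subseteq> {-K..K}" using finite_subset_symmetric_ivl[OF J] .
  have pos: "AE \<omega> in M. \<forall>j. X \<omega> j \<ge> 1" using AE_pos_iid_geom[OF iid] by simp
  show ?thesis
    unfolding prob_Phi_cylinder_eq_sum_src_blocks[OF pos K JK] prob_cylinder_eq_sum_tgt_blocks[OF pos K JK, where n=n]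
    by (simp add: prob_src_block_eq_tgt_block[OF iid K JK])
qed

end

subsection \<open>The converse\<close>

context random_int_seq
begin

lemma prob_Phi_cylinder_late:
  assumes iid: "iid_geom_on p {0..}" and K: "K \<ge> 0" and JK: "J \<subseteq> {-K..K}"
  shows "\<bar>prob {\<omega>\<in>space M. \<forall>j\<in>J. Phi n (X \<omega>) j = a j}
            - prob {\<omega>\<in>space M. late_Phi_cylinder n K J a (X \<omega>)}\<bar>
         \<le> prob {\<omega>\<in>space M. int n < (\<Sum>j\<in>{0..K}. X \<omega> j)}"
proof -
  let ?A = "{\<omega>\<in>space M. \<forall>j\<in>J. Phi n (X \<omega>) j = a j}"
  let ?H = "{\<omega>\<in>space M. late_Phi_cylinder n K J a (X \<omega>)}"
  let ?T = "{\<omega>\<in>space M. int n < (\<Sum>j\<in>{0..K}. X \<omega> j)}"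
  have [measurable]: "Measurable.pred M (\<lambda>\<omega>. late_Phi_cylinder n K J a (X \<omega>))"
    by (rule measurable_window_fun[where V="{0..int n + K}"]) (simp, rule late_Phi_cylinder_restrict[OF K JK])
  have [measurable]: "Measurable.pred M (\<lambda>\<omega>. int n < (\<Sum>j\<in>{0..K}. X \<omega> j))"
    by (rule measurable_window_fun[where V="{0..K}"]) (auto intro: sum.cong)
  have "?H \<subseteq> ?A" by (auto simp: late_Phi_cylinder_def)
  then have H_A: "prob ?H \<le> prob ?A" by (intro finite_measure_mono) measurable
  have "AE \<omega> in M. \<omega> \<in> ?A \<longrightarrow> \<omega> \<in> ?H \<union> ?T"
    using AE_pos_iid_geom[OF iid]
  proof eventually_elim
    case (elim \<omega>)
    then have pos0: "\<forall>j\<in>{0..int n}. X \<omega> j \<ge> 1" by auto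
    have "K < s_idx n (X \<omega>)" if "\<not> int n < (\<Sum>j\<in>{0..K}. X \<omega> j)"
    proof (rule ccontr)
      assume early: "\<not> K < s_idx n (X \<omega>)"
      let ?s = "nat (s_idx n (X \<omega>))"
      have "int n < (\<Sum>j\<in>{0..int ?s}. X \<omega> j)" using crosses_s_idx(2)[OF pos0] by (simp add: crosses_def)
      also have "\<dots> \<le> (\<Sum>j\<in>{0..K}. X \<omega> j)"
        using early elim K by (intro sum_mono2) (auto, smt (verit) atLeast_iff)
      finally show False using that by simp
    qed
    then show ?case using pos0 by (auto simp: late_Phi_cylinder_def)
  qed
  then have "prob ?A \<le> prob (?H \<union> ?T)" by (intro finite_measure_mono_AE) measurable
  also have "\<dots> \<le> prob ?H + prob ?T" by (intro measure_Un_le) measurable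
  finally show ?thesis using H_A by linarith
qed

lemma prob_cylinder_near_iid:
  assumes p: "0 < p" "p \<le> 1" and iid: "iid_geom_on p {0..}" and K: "K \<ge> 0" and VK: "V \<subseteq> {-K..K}"
    and inv: "prob {\<omega>\<in>space M. \<forall>j\<in>V. Phi n (X \<omega>) j = a j} = prob {\<omega>\<in>space M. \<forall>j\<in>V. X \<omega> j = a j}"
  shows "\<bar>prob {\<omega>\<in>space M. \<forall>j\<in>V. X \<omega> j = a j} - (\<Prod>j\<in>V. geom_mass p (a j))\<bar>
    \<le> prob {\<omega>\<in>space M. int n < (\<Sum>j\<in>{0..K}. X \<omega> j)}
      + measure (iid_geom_seq p) {\<omega>\<in>space (iid_geom_seq p). int n < (\<Sum>j\<in>{0..K}. \<omega> j)}"
proof -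
  let ?R = "iid_geom_seq p"
  have V: "finite V" using VK by (rule finite_subset) simp
  have iid_R: "iid_geom_seq.iid_geom_on p p UNIV" by (rule iid_geom_on_iid_geom_seq[OF p])
  then have iid_R0: "iid_geom_seq.iid_geom_on p p {0..}" by (rule iid_geom_seq.iid_geom_on_subset) simp
  have "prob {\<omega>\<in>space M. late_Phi_cylinder n K V a (X \<omega>)}
      = measure ?R {\<omega>\<in>space ?R. late_Phi_cylinder n K V a \<omega>}"
    by (rule prob_window_eq[OF random_int_seq_iid_geom_seq iid iid_R0, of "{0..int n + K}"])
      (auto simp: late_Phi_cylinder_restrict[OF K VK])
  moreover have "measure ?R {\<omega>\<in>space ?R. \<forall>j\<in>V. Phi n \<omega> j = a j} = (\<Prod>j\<in>V. geom_mass p (a j))"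
    using iid_geom_seq.prob_Phi_cylinder[OF iid_R V] iid_geom_seq.iid_geom_onD[OF iid_R V] by simp
  ultimately show ?thesis
    using prob_Phi_cylinder_late[OF iid K VK, of n a] iid_geom_seq.prob_Phi_cylinder_late[OF iid_R0 K VK, of n a] inv
    by linarith
qed

end

theorem (in random_int_seq) iid_geom_on_UNIV_if_Phi_invariant:
  assumes p: "0 < p" "p \<le> 1" and iid: "iid_geom_on p {0..}"
    and inv: "\<And>n J a. finite J \<Longrightarrow>
      prob {\<omega>\<in>space M. \<forall>j\<in>J. Phi n (X \<omega>) j = a j} = prob {\<omega>\<in>space M. \<forall>j\<in>J. X \<omega> j = a j}"
  shows "iid_geom_on p UNIV"
  unfolding iid_geom_on_def
proof (intro allI impI)
  fix V :: "int set" and a :: "int \<Rightarrow> int"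
  assume V: "finite V"
  obtain K where K: "K \<ge> 0" and VK: "V \<subseteq> {-K..K}" using finite_subset_symmetric_ivl[OF V] .
  let ?tail = "\<lambda>n. prob {\<omega>\<in>space M. int n < (\<Sum>j\<in>{0..K}. X \<omega> j)}
    + measure (iid_geom_seq p) {\<omega>\<in>space (iid_geom_seq p). int n < (\<Sum>j\<in>{0..K}. \<omega> j)}"
  have "?tail \<longlonglongrightarrow> 0 + 0"
    by (intro tendsto_add tendsto_prob_gt[OF measurable_sum_coords]
        iid_geom_seq.tendsto_prob_gt[OF iid_geom_seq.measurable_sum_coords]) simp_all
  moreover have "\<bar>prob {\<omega>\<in>space M. \<forall>j\<in>V. X \<omega> j = a j} - (\<Prod>j\<in>V. geom_mass p (a j))\<bar> \<le> ?tail n" for n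
    by (rule prob_cylinder_near_iid[OF p iid K VK inv[OF V]])
  ultimately have "\<bar>prob {\<omega>\<in>space M. \<forall>j\<in>V. X \<omega> j = a j} - (\<Prod>j\<in>V. geom_mass p (a j))\<bar> \<le> 0"
    by (intro LIMSEQ_le_const) auto
  then show "prob {\<omega>\<in>space M. \<forall>j\<in>V. X \<omega> j = a j} = (\<Prod>j\<in>V. geom_mass p (a j))" by simp
qed

lemma (in random_int_seq) Phi_invariant_iff:
  "(\<forall>n. seq_law M (\<lambda>\<omega>. Phi n (X \<omega>)) = seq_law M X) \<longleftrightarrow>
   (\<forall>n J a. finite J \<longrightarrow>
      prob {\<omega>\<in>space M. \<forall>j\<in>J. Phi n (X \<omega>) j = a j} = prob {\<omega>\<in>space M. \<forall>j\<in>J. X \<omega> j = a j})"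
proof -
  have "random_int_seq M X" by unfold_locales
  then show ?thesis
    using random_int_seq.seq_law_eq_iff[OF random_int_seq_Phi] by blast
qed

theorem theorem3p6:
  fixes M :: "'a measure" and G :: "int \<Rightarrow> 'a \<Rightarrow> int" and p :: real
  assumes "prob_space M"
    and "0 < p" and "p \<le> 1"
    and "\<And>i. G i \<in> measurable M (count_space UNIV)"
  shows "(prob_space.indep_vars M (\<lambda>_. count_space UNIV) G UNIV
            \<and> (\<forall>i. geom_pos_rv M p (G i)))
     \<longleftrightarrow>
         (prob_space.indep_vars M (\<lambda>_. count_space UNIV) G {0..}
            \<and> (\<forall>i\<ge>0. geom_pos_rv M p (G i))
            \<and> (\<forall>n::nat. seq_law M (\<lambda>\<omega>. Phi n (\<lambda>i. G i \<omega>)) = seq_law M (\<lambda>\<omega> i. G i \<omega>)))"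
proof -
  interpret random_int_seq M "\<lambda>\<omega> i. G i \<omega>"
    using assms(1,4) by (simp add: random_int_seq_def random_int_seq_axioms_def)
  show ?thesis
  proof
    assume P1: "indep_vars (\<lambda>_. count_space UNIV) G UNIV \<and> (\<forall>i. geom_pos_rv M p (G i))"
    then have "iid_geom_on p UNIV" by (intro iid_geom_on_if_indep) auto
    with P1 show "indep_vars (\<lambda>_. count_space UNIV) G {0..} \<and> (\<forall>i\<ge>0. geom_pos_rv M p (G i))
        \<and> (\<forall>n. seq_law M (\<lambda>\<omega>. Phi n (\<lambda>i. G i \<omega>)) = seq_law M (\<lambda>\<omega> i. G i \<omega>))"
      using prob_Phi_cylinder Phi_invariant_iff by (auto intro: indep_vars_subset)
  next
    assume P2: "indep_vars (\<lambda>_. count_space UNIV) G {0..} \<and> (\<forall>i\<ge>0. geom_pos_rv M p (G i))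
        \<and> (\<forall>n. seq_law M (\<lambda>\<omega>. Phi n (\<lambda>i. G i \<omega>)) = seq_law M (\<lambda>\<omega> i. G i \<omega>))"
    then have "iid_geom_on p {0..}" by (intro iid_geom_on_if_indep) auto
    with P2 have "iid_geom_on p UNIV"
      using iid_geom_on_UNIV_if_Phi_invariant[OF assms(2,3)] Phi_invariant_iff by blast
    then show "indep_vars (\<lambda>_. count_space UNIV) G UNIV \<and> (\<forall>i. geom_pos_rv M p (G i))"
      using indep_if_iid_geom_on_UNIV[OF assms(2,3)] by simp
  qed
qed

end
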